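(* (a) Let $\lambda=(n^m)$ be a rectangle and $1\le c\le n-1$. Then the total number of pairs $(T,u)$ with $T$ a standard Young tableau of shape $[\lambda]$ and $(T,u)$ a horizontal adjacency in column $c$ equals $f_\lambda$. (b) Let $\lambda$ be a strict partition with $\lambda_i=\lambda_1-i+1$ for all $1\le i\le\ell(\lambda)$ (a shifted rectangle) and $1\le c\le\lambda_1-1$. Then the total number of pairs $(T,u)$ with $T$ a shifted standard Young tableau of shape $[\lambda]^{\mathrm{sh}}$ and $(T,u)$ a horizontal adjacency in column $c$ equals $g^\lambda$.
   Context: Matrix coordinates. $[\lambda]=\{(i,j):i\in[\ell],j\in[\lambda_i]\}$; for strict $\lambda$, $[\lambda]^{\mathrm{sh}}=\{(i,j+i-1):i\in[\ell],j\in[\lambda_i]\}$. (Shifted) standard Young tableaux are bijections from the cell set to $[|\lambda|]$ increasing along rows and columns; $f_\lambda$ counts standard Young tableaux of shape $[\lambda]$ and $g^\lambda$ counts shifted ones of shape $[\lambda]^{\mathrm{sh}}$. For $u=(i,j)$ in the cell set $D$, $(T,u)$ is a horizontal adjacency if $(i,j+1)\in D$ and $T(i,j+1)=T(u)+1$; it lies in column $j$. *)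

theory Defs
  imports Main
begin

text \<open>Partitions are lists of positive naturals, weakly decreasing; cells are
 1-indexed matrix coordinates (row, column).\<close>

definition young_diagram :: "nat list \<Rightarrow> (nat \<times> nat) set" where
  "young_diagram lam = {(i, j). 1 \<le> i \<and> i \<le> length lam \<and> 1 \<le> j \<and> j \<le> lam ! (i - 1)}"

definition shifted_diagram :: "nat list \<Rightarrow> (nat \<times> nat) set" where
  "shifted_diagram lam = {(i, j + i - 1) | i j. 1 \<le> i \<and> i \<le> length lam \<and> 1 \<le> j \<and> j \<le> lam ! (i - 1)}"

definition strict_partition :: "nat list \<Rightarrow> bool" where
  "strict_partition lam \<longleftrightarrow> sorted_wrt (>) lam \<and> (\<forall>x\<in>set lam. 0 < x)"

text \<open>A standard tableau on a cell set D: a bijection D -> {1..|D|}, increasing along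
 rows and columns; normalised to 0 outside D so that tableaux form a finite set.\<close>
definition is_std_tableau :: "(nat \<times> nat) set \<Rightarrow> (nat \<times> nat \<Rightarrow> nat) \<Rightarrow> bool" where
  "is_std_tableau D T \<longleftrightarrow>
     bij_betw T D {1..card D} \<and>
     (\<forall>i j. (i, j) \<in> D \<and> (i, j + 1) \<in> D \<longrightarrow> T (i, j) < T (i, j + 1)) \<and>
     (\<forall>i j. (i, j) \<in> D \<and> (i + 1, j) \<in> D \<longrightarrow> T (i, j) < T (i + 1, j)) \<and>
     (\<forall>x. x \<notin> D \<longrightarrow> T x = 0)"

definition std_tableaux :: "(nat \<times> nat) set \<Rightarrow> (nat \<times> nat \<Rightarrow> nat) set" where
  "std_tableaux D = {T. is_std_tableau D T}"

definition f_count :: "nat list \<Rightarrow> nat" where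
  "f_count lam = card (std_tableaux (young_diagram lam))"

definition g_count :: "nat list \<Rightarrow> nat" where
  "g_count lam = card (std_tableaux (shifted_diagram lam))"

definition horiz_adj :: "(nat \<times> nat) set \<Rightarrow> (nat \<times> nat \<Rightarrow> nat) \<Rightarrow> nat \<times> nat \<Rightarrow> bool" where
  "horiz_adj D T u \<longleftrightarrow> u \<in> D \<and> (fst u, snd u + 1) \<in> D \<and> T (fst u, snd u + 1) = T u + 1"

definition adj_in_column :: "(nat \<times> nat) set \<Rightarrow> nat \<Rightarrow> ((nat \<times> nat \<Rightarrow> nat) \<times> (nat \<times> nat)) set" where
  "adj_in_column D c = {(T, u). T \<in> std_tableaux D \<and> horiz_adj D T u \<and> snd u = c}"

end

theory Submission
  imports Defs "HOL-Combinatorics.Transposition"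
begin

text \<open>
  Count pairs \<open>(T, x)\<close> of a standard tableau and a cell \<open>x\<close> in a fixed column \<open>j\<close> in two ways:
  by where the entry \<open>T x + 1\<close> sits (nowhere, right of \<open>x\<close>, below \<open>x\<close>, elsewhere) and by
  where \<open>T x - 1\<close> sits (nowhere, left of \<open>x\<close>, above \<open>x\<close>, elsewhere). Vertical adjacencies
  inside column \<open>j\<close> occur in both counts, and the two ``elsewhere'' classes are matched by
  exchanging the entries \<open>T x\<close> and \<open>T x + 1\<close>, which keeps the tableau standard precisely
  because their cells are not adjacent. What remains says that the number of horizontal
  adjacencies leaving column \<open>j\<close> equals the number entering it, corrected by whether \<open>j\<close>
  contains the cell of the entry \<open>1\<close> or the cell of the largest entry. In a diagram whose
  entry \<open>1\<close> is forced into column 1 and whose largest entry is forced into its last column,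
  such as a rectangle or a shifted rectangle, every column before the last therefore carries
  exactly one horizontal adjacency per tableau.
\<close>

type_synonym cell = "nat \<times> nat"
type_synonym tableau = "cell \<Rightarrow> nat"

section \<open>Standard tableaux\<close>

definition next_cell :: "cell \<Rightarrow> cell \<Rightarrow> bool" where
  "next_cell x y \<longleftrightarrow> y = (fst x, Suc (snd x)) \<or> y = (Suc (fst x), snd x)"

lemma std_tableauI:
  assumes "bij_betw T D {1..card D}"
    and "\<And>x y. x \<in> D \<Longrightarrow> y \<in> D \<Longrightarrow> next_cell x y \<Longrightarrow> T x < T y"
    and "\<And>x. x \<notin> D \<Longrightarrow> T x = 0"
  shows "T \<in> std_tableaux D"
  unfolding std_tableaux_def is_std_tableau_def
  using assms(1,3) assms(2)[unfolded next_cell_def] by simp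

lemma
  assumes "T \<in> std_tableaux D"
  shows std_tableau_bij: "bij_betw T D {1..card D}"
    and std_tableau_mono: "x \<in> D \<Longrightarrow> y \<in> D \<Longrightarrow> next_cell x y \<Longrightarrow> T x < T y"
    and std_tableau_outside: "x \<notin> D \<Longrightarrow> T x = 0"
proof -
  have std: "is_std_tableau D T"
    using assms by (simp add: std_tableaux_def)
  then show "bij_betw T D {1..card D}" and "x \<notin> D \<Longrightarrow> T x = 0"
    unfolding is_std_tableau_def by blast+
  show "x \<in> D \<Longrightarrow> y \<in> D \<Longrightarrow> next_cell x y \<Longrightarrow> T x < T y"
    using std unfolding is_std_tableau_def next_cell_def by (cases x) auto
qed

lemma std_tableau_range: "T \<in> std_tableaux D \<Longrightarrow> x \<in> D \<Longrightarrow> T x \<in> {1..card D}"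
  by (rule bij_betw_apply[OF std_tableau_bij])

lemma std_tableau_inj: "T \<in> std_tableaux D \<Longrightarrow> x \<in> D \<Longrightarrow> y \<in> D \<Longrightarrow> T x = T y \<Longrightarrow> x = y"
  using std_tableau_bij[THEN bij_betw_imp_inj_on] by (rule inj_onD)

lemma std_tableau_surj: "T \<in> std_tableaux D \<Longrightarrow> v \<in> {1..card D} \<Longrightarrow> \<exists>x\<in>D. T x = v"
  using std_tableau_bij[THEN bij_betw_imp_surj_on] by (metis imageE)

lemma finite_std_tableaux:
  assumes "finite D"
  shows "finite (std_tableaux D)"
proof (rule finite_subset)
  show "std_tableaux D \<subseteq> {T. \<forall>x. (x \<in> D \<longrightarrow> T x \<in> {0..card D}) \<and> (x \<notin> D \<longrightarrow> T x = 0)}"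
    using std_tableau_range std_tableau_outside by fastforce
  show "finite {T. \<forall>x. (x \<in> D \<longrightarrow> T x \<in> {0..card D}) \<and> (x \<notin> D \<longrightarrow> T x = 0)}"
    using assms by (intro finite_set_of_finite_funs) auto
qed

lemma transpose_Suc_less:
  fixes k u v :: nat
  assumes "u < v" and "\<not> (u = k \<and> v = Suc k)"
  shows "Transposition.transpose k (Suc k) u < Transposition.transpose k (Suc k) v"
  using assms by (auto simp: Transposition.transpose_def)

lemma std_tableau_transpose:
  assumes T: "T \<in> std_tableaux D" and p: "p \<in> D" and q: "q \<in> D"
    and Tq: "T q = Suc (T p)" and not_next: "\<not> next_cell p q"
  shows "Transposition.transpose (T p) (T q) \<circ> T \<in> std_tableaux D"
proof (rule std_tableauI)
  have "T p \<in> {1..card D} \<longleftrightarrow> T q \<in> {1..card D}"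
    using std_tableau_range[OF T] p q by blast
  then have "bij_betw (Transposition.transpose (T p) (T q)) {1..card D} {1..card D}"
    by (rule bij_betw_transpose_iff)
  with std_tableau_bij[OF T]
  show "bij_betw (Transposition.transpose (T p) (T q) \<circ> T) D {1..card D}"
    by (rule bij_betw_trans)
next
  fix x y assume "x \<in> D" "y \<in> D" "next_cell x y"
  moreover have "\<not> (T x = T p \<and> T y = T q)"
  proof
    assume "T x = T p \<and> T y = T q"
    then have "x = p" "y = q"
      using std_tableau_inj[OF T, of x p] std_tableau_inj[OF T, of y q] \<open>x \<in> D\<close> \<open>y \<in> D\<close> p q
      by simp_all
    with not_next \<open>next_cell x y\<close> show False by simp
  qed
  ultimately show
    "(Transposition.transpose (T p) (T q) \<circ> T) x < (Transposition.transpose (T p) (T q) \<circ> T) y"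
    unfolding comp_apply Tq by (intro transpose_Suc_less std_tableau_mono[OF T]) (use Tq in auto)
next
  fix x assume "x \<notin> D"
  moreover have "0 < T p" using std_tableau_range[OF T p] by simp
  ultimately show "(Transposition.transpose (T p) (T q) \<circ> T) x = 0"
    by (simp add: std_tableau_outside[OF T] Tq)
qed

lemma std_tableau_min_cell:
  assumes T: "T \<in> std_tableaux D" and a: "a \<in> D"
    and pred: "\<And>x. x \<in> D \<Longrightarrow> x \<noteq> a \<Longrightarrow> \<exists>y\<in>D. next_cell y x"
  shows "T a = 1"
proof -
  have "1 \<in> {1..card D}" using std_tableau_range[OF T a] by simp
  then obtain x where x: "x \<in> D" "T x = 1" using std_tableau_surj[OF T] by blast
  have "x = a"
  proof (rule ccontr)
    assume "x \<noteq> a"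
    then obtain y where "y \<in> D" "next_cell y x" using pred x(1) by blast
    then have "T y < 1" using std_tableau_mono[OF T] x by fastforce
    with std_tableau_range[OF T \<open>y \<in> D\<close>] show False by simp
  qed
  with x show ?thesis by simp
qed

lemma std_tableau_max_cell:
  assumes T: "T \<in> std_tableaux D" and b: "b \<in> D"
    and succ: "\<And>x. x \<in> D \<Longrightarrow> x \<noteq> b \<Longrightarrow> \<exists>y\<in>D. next_cell x y"
  shows "T b = card D"
proof -
  have "card D \<in> {1..card D}" using std_tableau_range[OF T b] by simp
  then obtain x where x: "x \<in> D" "T x = card D" using std_tableau_surj[OF T] by blast
  have "x = b"
  proof (rule ccontr)
    assume "x \<noteq> b"
    then obtain y where "y \<in> D" "next_cell x y" using succ x(1) by blast
    then have "card D < T y" using std_tableau_mono[OF T] x by fastforce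
    with std_tableau_range[OF T \<open>y \<in> D\<close>] show False by simp
  qed
  with x show ?thesis by simp
qed

section \<open>Counting tableau-cell pairs in a column\<close>

lemma card_split_exclusive3:
  assumes "finite A"
    and "\<And>x. x \<in> A \<Longrightarrow> P x \<Longrightarrow> \<not> Q x" "\<And>x. x \<in> A \<Longrightarrow> P x \<Longrightarrow> \<not> R x"
    and "\<And>x. x \<in> A \<Longrightarrow> Q x \<Longrightarrow> \<not> R x"
  shows "card A = card {x\<in>A. P x} + card {x\<in>A. Q x} + card {x\<in>A. R x}
                  + card {x\<in>A. \<not> P x \<and> \<not> Q x \<and> \<not> R x}"
proof -
  have indicator: "card {x\<in>A. B x} = (\<Sum>x\<in>A. if B x then 1 else 0)" for B
    using assms(1) by (simp add: sum.inter_filter[symmetric])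
  have "card A = (\<Sum>x\<in>A. (if P x then 1 else 0) + (if Q x then 1 else 0)
      + (if R x then 1 else 0) + (if \<not> P x \<and> \<not> Q x \<and> \<not> R x then 1 else 0))"
    unfolding card_eq_sum by (rule sum.cong) (use assms(2-4) in auto)
  then show ?thesis
    unfolding indicator sum.distrib .
qed

definition column_pairs :: "cell set \<Rightarrow> nat \<Rightarrow> (tableau \<times> cell) set" where
  "column_pairs D j = {(T, x). T \<in> std_tableaux D \<and> x \<in> D \<and> snd x = j}"

definition vert_adj_in_column :: "cell set \<Rightarrow> nat \<Rightarrow> (tableau \<times> cell) set" where
  "vert_adj_in_column D j = {(T, u). T \<in> std_tableaux D \<and> u \<in> D \<and> (Suc (fst u), snd u) \<in> D
      \<and> T (Suc (fst u), snd u) = T u + 1 \<and> snd u = j}"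

definition entry_in_column :: "cell set \<Rightarrow> nat \<Rightarrow> nat \<Rightarrow> (tableau \<times> cell) set" where
  "entry_in_column D j v = {(T, x). (T, x) \<in> column_pairs D j \<and> T x = v}"

definition horiz_adj_into_column :: "cell set \<Rightarrow> nat \<Rightarrow> (tableau \<times> cell) set" where
  "horiz_adj_into_column D j = {(T, u). T \<in> std_tableaux D \<and> horiz_adj D T u \<and> Suc (snd u) = j}"

definition succ_free_in_column :: "cell set \<Rightarrow> nat \<Rightarrow> (tableau \<times> cell) set" where
  "succ_free_in_column D j = {(T, x). (T, x) \<in> column_pairs D j \<and> T x \<noteq> card D
      \<and> (\<forall>y\<in>D. next_cell x y \<longrightarrow> T y \<noteq> T x + 1)}"

definition pred_free_in_column :: "cell set \<Rightarrow> nat \<Rightarrow> (tableau \<times> cell) set" where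
  "pred_free_in_column D j = {(T, x). (T, x) \<in> column_pairs D j \<and> T x \<noteq> 1
      \<and> (\<forall>y\<in>D. next_cell y x \<longrightarrow> T x \<noteq> T y + 1)}"

lemma finite_column_pairs: "finite D \<Longrightarrow> finite (column_pairs D j)"
  by (rule finite_subset[of _ "std_tableaux D \<times> D"])
    (auto simp: column_pairs_def finite_std_tableaux)

lemma card_column_pairs_by_successor:
  assumes fin: "finite D"
  shows "card (column_pairs D j) = card (entry_in_column D j (card D)) + card (adj_in_column D j)
      + card (vert_adj_in_column D j) + card (succ_free_in_column D j)"
proof -
  let ?right = "\<lambda>x. (fst x, Suc (snd x))" and ?below = "\<lambda>x. (Suc (fst x), snd x)"
  let ?P = "\<lambda>(T, x). T x = card D"
  let ?Q = "\<lambda>(T, x). ?right x \<in> D \<and> T (?right x) = T x + 1"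
  let ?R = "\<lambda>(T, x). ?below x \<in> D \<and> T (?below x) = T x + 1"
  have split: "card (column_pairs D j) = card {z \<in> column_pairs D j. ?P z} + card {z \<in> column_pairs D j. ?Q z}
      + card {z \<in> column_pairs D j. ?R z} + card {z \<in> column_pairs D j. \<not> ?P z \<and> \<not> ?Q z \<and> \<not> ?R z}"
  proof (rule card_split_exclusive3[OF finite_column_pairs[OF fin]])
    fix z assume "z \<in> column_pairs D j"
    then obtain T x where z: "z = (T, x)" and T: "T \<in> std_tableaux D"
      by (auto simp: column_pairs_def)
    show "?P z \<Longrightarrow> \<not> ?Q z" and "?P z \<Longrightarrow> \<not> ?R z"
      using std_tableau_range[OF T] z by fastforce+
    show "?Q z \<Longrightarrow> \<not> ?R z"
      using std_tableau_inj[OF T, of "?right x" "?below x"] z by auto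
  qed
  have "{z \<in> column_pairs D j. ?P z} = entry_in_column D j (card D)"
    by (auto simp: entry_in_column_def)
  moreover have "{z \<in> column_pairs D j. ?Q z} = adj_in_column D j"
    by (auto simp: column_pairs_def adj_in_column_def horiz_adj_def)
  moreover have "{z \<in> column_pairs D j. ?R z} = vert_adj_in_column D j"
    by (auto simp: column_pairs_def vert_adj_in_column_def)
  moreover have "{z \<in> column_pairs D j. \<not> ?P z \<and> \<not> ?Q z \<and> \<not> ?R z}
      = succ_free_in_column D j"
    by (auto simp: succ_free_in_column_def next_cell_def)
  ultimately show ?thesis using split by simp
qed

lemma card_column_pairs_by_predecessor:
  assumes fin: "finite D"
  shows "card (column_pairs D j) = card (entry_in_column D j 1) + card (horiz_adj_into_column D j)
      + card (vert_adj_in_column D j) + card (pred_free_in_column D j)"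
proof -
  let ?shift_right = "\<lambda>(T, y). (T, (fst y, Suc (snd y)))"
  let ?shift_down = "\<lambda>(T, y). (T, (Suc (fst y), snd y))"
  let ?P = "\<lambda>(T, x). T x = 1"
  let ?Q = "\<lambda>(T, x). \<exists>y\<in>D. x = (fst y, Suc (snd y)) \<and> T x = T y + 1"
  let ?R = "\<lambda>(T, x). \<exists>y\<in>D. x = (Suc (fst y), snd y) \<and> T x = T y + 1"
  have split: "card (column_pairs D j) = card {z \<in> column_pairs D j. ?P z} + card {z \<in> column_pairs D j. ?Q z}
      + card {z \<in> column_pairs D j. ?R z} + card {z \<in> column_pairs D j. \<not> ?P z \<and> \<not> ?Q z \<and> \<not> ?R z}"
  proof (rule card_split_exclusive3[OF finite_column_pairs[OF fin]])
    fix z assume "z \<in> column_pairs D j"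
    then obtain T x where z: "z = (T, x)" and T: "T \<in> std_tableaux D"
      by (auto simp: column_pairs_def)
    show "?P z \<Longrightarrow> \<not> ?Q z" and "?P z \<Longrightarrow> \<not> ?R z"
      using std_tableau_range[OF T] z by fastforce+
    show "\<not> ?R z" if "?Q z"
    proof
      assume "?R z"
      with \<open>?Q z\<close> z obtain y y' where "y \<in> D" "y' \<in> D" "T y = T y'"
        and "(fst y, Suc (snd y)) = (Suc (fst y'), snd y')" by auto
      with std_tableau_inj[OF T] show False by (metis Pair_inject n_not_Suc_n)
    qed
  qed
  have "{z \<in> column_pairs D j. ?Q z} = ?shift_right ` horiz_adj_into_column D j"
    by (auto simp: column_pairs_def horiz_adj_into_column_def horiz_adj_def image_iff)
  then have "card {z \<in> column_pairs D j. ?Q z} = card (horiz_adj_into_column D j)"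
    by (simp add: card_image inj_on_def case_prod_unfold prod_eq_iff)
  moreover have "{z \<in> column_pairs D j. ?R z} = ?shift_down ` vert_adj_in_column D j"
    by (auto simp: column_pairs_def vert_adj_in_column_def image_iff)
  then have "card {z \<in> column_pairs D j. ?R z} = card (vert_adj_in_column D j)"
    by (simp add: card_image inj_on_def case_prod_unfold prod_eq_iff)
  moreover have "{z \<in> column_pairs D j. \<not> ?P z \<and> \<not> ?Q z \<and> \<not> ?R z} = pred_free_in_column D j"
    by (auto simp: pred_free_in_column_def next_cell_def)
  moreover have "{z \<in> column_pairs D j. ?P z} = entry_in_column D j 1"
    by (auto simp: entry_in_column_def)
  ultimately show ?thesis
    using split by simp
qed

lemma transpose_successor_free:
  assumes T: "T \<in> std_tableaux D" and x: "x \<in> D" and not_max: "T x \<noteq> card D"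
    and free: "\<forall>y\<in>D. next_cell x y \<longrightarrow> T y \<noteq> T x + 1"
  defines "T' \<equiv> Transposition.transpose (T x) (Suc (T x)) \<circ> T"
  shows "T' \<in> std_tableaux D" and "T' x = Suc (T x)"
    and "\<forall>y\<in>D. next_cell y x \<longrightarrow> T' x \<noteq> T' y + 1"
proof -
  have "Suc (T x) \<in> {1..card D}" using std_tableau_range[OF T x] not_max by auto
  then obtain q where q: "q \<in> D" "T q = Suc (T x)" using std_tableau_surj[OF T] by blast
  with free have "\<not> next_cell x q" by auto
  from std_tableau_transpose[OF T x q(1) q(2) this] q(2)
  show "T' \<in> std_tableaux D" by (simp add: T'_def)
  show "T' x = Suc (T x)" by (simp add: T'_def)
  show "\<forall>y\<in>D. next_cell y x \<longrightarrow> T' x \<noteq> T' y + 1"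
  proof (intro ballI impI notI)
    fix y assume "y \<in> D" "next_cell y x" "T' x = T' y + 1"
    then have "T y = Suc (T x)"
      by (simp add: T'_def Transposition.transpose_def split: if_splits)
    with std_tableau_mono[OF T \<open>y \<in> D\<close> x \<open>next_cell y x\<close>] show False by simp
  qed
qed

lemma transpose_predecessor_free:
  assumes T: "T \<in> std_tableaux D" and x: "x \<in> D" and not_min: "T x \<noteq> 1"
    and free: "\<forall>y\<in>D. next_cell y x \<longrightarrow> T x \<noteq> T y + 1"
  defines "T' \<equiv> Transposition.transpose (T x - 1) (T x) \<circ> T"
  shows "T' \<in> std_tableaux D" and "T' x = T x - 1"
    and "\<forall>y\<in>D. next_cell x y \<longrightarrow> T' y \<noteq> T' x + 1"
proof -
  have Tx: "T x = Suc (T x - 1)" and "T x - 1 \<in> {1..card D}"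
    using std_tableau_range[OF T x] not_min by auto
  then obtain p where p: "p \<in> D" "T p = T x - 1" using std_tableau_surj[OF T] by blast
  with free Tx have "\<not> next_cell p x" by auto
  from std_tableau_transpose[OF T p(1) x _ this] p(2) Tx
  show "T' \<in> std_tableaux D" by (simp add: T'_def)
  show "T' x = T x - 1" by (simp add: T'_def)
  show "\<forall>y\<in>D. next_cell x y \<longrightarrow> T' y \<noteq> T' x + 1"
  proof (intro ballI impI notI)
    fix y assume "y \<in> D" "next_cell x y" "T' y = T' x + 1"
    then have "T y = T x - 1" using Tx
      by (simp add: T'_def Transposition.transpose_def split: if_splits)
    with std_tableau_mono[OF T x \<open>y \<in> D\<close> \<open>next_cell x y\<close>] show False by simp
  qed
qed

lemma card_succ_free_eq_pred_free:
  "card (succ_free_in_column D j) = card (pred_free_in_column D j)"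
  (is "card ?F = card ?G")
proof (rule bij_betw_same_card)
  let ?f = "\<lambda>(T, x). (Transposition.transpose (T x) (Suc (T x)) \<circ> T, x)"
  let ?g = "\<lambda>(T, x). (Transposition.transpose (T x - 1) (T x) \<circ> T, x)"
  show "bij_betw ?f ?F ?G"
  proof (rule bij_betw_byWitness[where f' = ?g])
    show "\<forall>z\<in>?F. ?g (?f z) = z"
      by (auto simp: fun_eq_iff Transposition.transpose_def)
    show "\<forall>z\<in>?G. ?f (?g z) = z"
      by (auto simp: fun_eq_iff Transposition.transpose_def pred_free_in_column_def column_pairs_def
          dest!: std_tableau_range)
    show "?f ` ?F \<subseteq> ?G"
    proof (rule image_subsetI)
      fix z assume "z \<in> ?F"
      then obtain T x where z: "z = (T, x)" and T: "T \<in> std_tableaux D" "x \<in> D" "snd x = j"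
        and free: "T x \<noteq> card D" "\<forall>y\<in>D. next_cell x y \<longrightarrow> T y \<noteq> T x + 1"
        by (auto simp: succ_free_in_column_def column_pairs_def)
      show "?f z \<in> ?G"
        using transpose_successor_free[OF T(1,2) free] std_tableau_range[OF T(1,2)] z T(2,3)
        by (auto simp: pred_free_in_column_def column_pairs_def)
    qed
    show "?g ` ?G \<subseteq> ?F"
    proof (rule image_subsetI)
      fix z assume "z \<in> ?G"
      then obtain T x where z: "z = (T, x)" and T: "T \<in> std_tableaux D" "x \<in> D" "snd x = j"
        and free: "T x \<noteq> 1" "\<forall>y\<in>D. next_cell y x \<longrightarrow> T x \<noteq> T y + 1"
        by (auto simp: pred_free_in_column_def column_pairs_def)
      show "?g z \<in> ?F"
        using transpose_predecessor_free[OF T(1,2) free] std_tableau_range[OF T(1,2)] z T(2,3)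
        by (auto simp: succ_free_in_column_def column_pairs_def)
    qed
  qed
qed

lemma column_balance:
  assumes "finite D"
  shows "card (entry_in_column D j (card D)) + card (adj_in_column D j)
       = card (entry_in_column D j 1) + card (horiz_adj_into_column D j)"
  using card_column_pairs_by_successor[OF assms, of j] card_column_pairs_by_predecessor[OF assms, of j]
    card_succ_free_eq_pred_free[of D j]
  by linarith

lemma card_entry_in_column_fixed_cell:
  assumes a: "a \<in> D" and fixed: "\<And>T. T \<in> std_tableaux D \<Longrightarrow> T a = v"
  shows "card (entry_in_column D j v) = (if j = snd a then card (std_tableaux D) else 0)"
proof -
  have "entry_in_column D j v = (if j = snd a then (\<lambda>T. (T, a)) ` std_tableaux D else {})"
  proof -
    have "T x = v \<longleftrightarrow> x = a" if "T \<in> std_tableaux D" "x \<in> D" for T x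
      using fixed[OF that(1)] std_tableau_inj[OF that a] by auto
    with a show ?thesis by (auto simp: entry_in_column_def column_pairs_def)
  qed
  then show ?thesis by (simp add: card_image inj_on_def)
qed

lemma card_adj_in_column_eq_card_std_tableaux:
  assumes fin: "finite D" and a: "a \<in> D" and b: "b \<in> D"
    and pred: "\<And>x. x \<in> D \<Longrightarrow> x \<noteq> a \<Longrightarrow> \<exists>y\<in>D. next_cell y x"
    and succ: "\<And>x. x \<in> D \<Longrightarrow> x \<noteq> b \<Longrightarrow> \<exists>y\<in>D. next_cell x y"
    and c: "snd a \<le> c" "c < snd b"
  shows "card (adj_in_column D c) = card (std_tableaux D)"
proof -
  let ?S = "std_tableaux D"
  have "T a = 1" and "T b = card D" if "T \<in> ?S" for T
    using std_tableau_min_cell[OF that a pred] std_tableau_max_cell[OF that b succ] by blast+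
  then have min: "card (entry_in_column D j 1) = (if j = snd a then card ?S else 0)"
    and max: "j < snd b \<Longrightarrow> card (entry_in_column D j (card D)) = 0" for j
    using card_entry_in_column_fixed_cell[OF a] card_entry_in_column_fixed_cell[OF b] by auto
  have "j < snd b \<Longrightarrow> card (adj_in_column D j) = (if snd a \<le> j then card ?S else 0)" for j
  proof (induction j)
    case 0
    have "horiz_adj_into_column D 0 = {}"
      by (simp add: horiz_adj_into_column_def)
    with 0 show ?case using column_balance[OF fin, of 0] min[of 0] max[of 0] by auto
  next
    case (Suc j)
    have "horiz_adj_into_column D (Suc j) = adj_in_column D j"
      by (auto simp: horiz_adj_into_column_def adj_in_column_def)
    then show ?case
      using Suc column_balance[OF fin, of "Suc j"] min[of "Suc j"] max[of "Suc j"] by auto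
  qed
  with c show ?thesis by simp
qed

section \<open>Diagrams with a common right edge\<close>

definition flush_right_diagram :: "nat \<Rightarrow> nat \<Rightarrow> (nat \<Rightarrow> nat) \<Rightarrow> cell set" where
  "flush_right_diagram l K s = {(i, j). 1 \<le> i \<and> i \<le> l \<and> s i \<le> j \<and> j \<le> K}"

lemma flush_right_diagram_has_predecessor:
  assumes "mono s" "s 1 = 1"
    and x: "x \<in> flush_right_diagram l K s" "x \<noteq> (1, 1)"
  shows "\<exists>y\<in>flush_right_diagram l K s. next_cell y x"
proof -
  obtain i j where x_eq: "x = (i, j)" and ij: "1 \<le> i" "i \<le> l" "s i \<le> j" "j \<le> K"
    using x(1) by (auto simp: flush_right_diagram_def)
  show ?thesis
  proof (cases "2 \<le> i")
    case True
    have "s (i - 1) \<le> s i" using \<open>mono s\<close> by (simp add: monoD)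
    with True ij have "(i - 1, j) \<in> flush_right_diagram l K s"
      by (auto simp: flush_right_diagram_def)
    with True show ?thesis
      by (auto simp: next_cell_def x_eq intro!: bexI[of _ "(i - 1, j)"])
  next
    case False
    with ij have "i = 1" by simp
    with x(2) ij assms(2) have "(i, j - 1) \<in> flush_right_diagram l K s" "2 \<le> j"
      by (auto simp: flush_right_diagram_def x_eq)
    then show ?thesis
      by (auto simp: next_cell_def x_eq intro!: bexI[of _ "(i, j - 1)"])
  qed
qed

lemma flush_right_diagram_has_successor:
  assumes "mono s" "s l \<le> K"
    and x: "x \<in> flush_right_diagram l K s" "x \<noteq> (l, K)"
  shows "\<exists>y\<in>flush_right_diagram l K s. next_cell x y"
proof -
  obtain i j where x_eq: "x = (i, j)" and ij: "1 \<le> i" "i \<le> l" "s i \<le> j" "j \<le> K"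
    using x(1) by (auto simp: flush_right_diagram_def)
  show ?thesis
  proof (cases "j < K")
    case True
    with ij have "(i, Suc j) \<in> flush_right_diagram l K s"
      by (auto simp: flush_right_diagram_def)
    then show ?thesis by (auto simp: next_cell_def x_eq)
  next
    case False
    with x(2) ij have "i < l" "j = K" by (auto simp: x_eq)
    moreover have "s (Suc i) \<le> s l" using \<open>mono s\<close> \<open>i < l\<close> by (simp add: monoD)
    ultimately have "(Suc i, j) \<in> flush_right_diagram l K s"
      using ij \<open>s l \<le> K\<close> by (auto simp: flush_right_diagram_def)
    then show ?thesis by (auto simp: next_cell_def x_eq)
  qed
qed

lemma card_adj_in_column_flush_right_diagram:
  assumes "mono s" "s 1 = 1" "s l \<le> K" "1 \<le> l" "1 \<le> c" "c < K"
  shows "card (adj_in_column (flush_right_diagram l K s) c)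
       = card (std_tableaux (flush_right_diagram l K s))"
proof (rule card_adj_in_column_eq_card_std_tableaux)
  show "finite (flush_right_diagram l K s)"
    by (rule finite_subset[of _ "{1..l} \<times> {..K}"]) (auto simp: flush_right_diagram_def)
  show "(1, 1) \<in> flush_right_diagram l K s" "(l, K) \<in> flush_right_diagram l K s"
    using assms by (auto simp: flush_right_diagram_def)
qed (use assms flush_right_diagram_has_predecessor flush_right_diagram_has_successor in auto)

lemma young_diagram_rectangle:
  "young_diagram (replicate m n) = flush_right_diagram m n (\<lambda>_. 1)"
  by (auto simp: young_diagram_def flush_right_diagram_def)

lemma strict_partition_length_le_first:
  assumes "strict_partition lam" and "lam \<noteq> []"
  shows "length lam \<le> lam ! 0"
  using assms
proof (induction lam)
  case (Cons x xs)
  then have x: "0 < x" "\<forall>y\<in>set xs. y < x" and xs: "strict_partition xs"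
    by (auto simp: strict_partition_def)
  show ?case
  proof (cases xs)
    case (Cons y ys)
    with Cons.IH xs have "length xs \<le> xs ! 0" by simp
    moreover have "xs ! 0 < x" using x Cons by simp
    ultimately show ?thesis by simp
  qed (use x in simp)
qed simp

lemma shifted_diagram_shifted_rectangle:
  assumes staircase: "\<forall>i. 1 \<le> i \<and> i \<le> length lam \<longrightarrow> lam ! (i - 1) = lam ! 0 - i + 1"
    and len: "length lam \<le> lam ! 0"
  shows "shifted_diagram lam = flush_right_diagram (length lam) (lam ! 0) (\<lambda>i. i)"
  unfolding flush_right_diagram_def
proof (intro set_eqI iffI)
  fix x assume "x \<in> shifted_diagram lam"
  then obtain i j where x: "x = (i, j + i - 1)"
    and ij: "1 \<le> i" "i \<le> length lam" "1 \<le> j" "j \<le> lam ! (i - 1)"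
    by (auto simp: shifted_diagram_def)
  with staircase len show "x \<in> {(i, j). 1 \<le> i \<and> i \<le> length lam \<and> i \<le> j \<and> j \<le> lam ! 0}"
    by auto
next
  fix x assume "x \<in> {(i, j). 1 \<le> i \<and> i \<le> length lam \<and> i \<le> j \<and> j \<le> lam ! 0}"
  then obtain i j where x: "x = (i, j)" and ij: "1 \<le> i" "i \<le> length lam" "i \<le> j" "j \<le> lam ! 0"
    by auto
  with staircase have "x = (i, (j - i + 1) + i - 1)" "1 \<le> j - i + 1" "j - i + 1 \<le> lam ! (i - 1)"
    by auto
  with ij show "x \<in> shifted_diagram lam"
    unfolding shifted_diagram_def by blast
qed

lemma card_adj_in_column_rectangle:
  assumes "1 \<le> m" and "1 \<le> c" and "c \<le> n - 1"
  shows "card (adj_in_column (young_diagram (replicate m n)) c) = f_count (replicate m n)"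
  unfolding f_count_def young_diagram_rectangle
  by (rule card_adj_in_column_flush_right_diagram) (use assms in \<open>auto simp: mono_def\<close>)

lemma card_adj_in_column_shifted_rectangle:
  assumes "strict_partition lam" and "lam \<noteq> []"
    and staircase: "\<forall>i. 1 \<le> i \<and> i \<le> length lam \<longrightarrow> lam ! (i - 1) = lam ! 0 - i + 1"
    and "1 \<le> c" and "c \<le> lam ! 0 - 1"
  shows "card (adj_in_column (shifted_diagram lam) c) = g_count lam"
proof -
  have len: "length lam \<le> lam ! 0"
    using assms(1,2) by (rule strict_partition_length_le_first)
  show ?thesis
    unfolding g_count_def shifted_diagram_shifted_rectangle[OF staircase len]
    by (rule card_adj_in_column_flush_right_diagram) (use assms len in \<open>auto simp: mono_def Suc_le_eq\<close>)
qed

theorem mainTheorem15: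
  shows "(\<forall>n m c. 1 \<le> m \<and> 1 \<le> c \<and> c \<le> n - 1 \<longrightarrow>
            card (adj_in_column (young_diagram (replicate m n)) c) = f_count (replicate m n))
       \<and> (\<forall>lam c. strict_partition lam \<and> lam \<noteq> [] \<and>
            (\<forall>i. 1 \<le> i \<and> i \<le> length lam \<longrightarrow> lam ! (i - 1) = lam ! 0 - i + 1) \<and>
            1 \<le> c \<and> c \<le> lam ! 0 - 1 \<longrightarrow>
            card (adj_in_column (shifted_diagram lam) c) = g_count lam)"
  using card_adj_in_column_rectangle card_adj_in_column_shifted_rectangle by blast

end
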